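(* Let $A,B,P,Q,X,Y$ be positive words (in the letters $\sigma_1,\dots,\sigma_{n-1},x_1,\dots,x_{n-1}$, the words $A,B$ possibly empty) with $A\doteq P$, $B\doteq Q$ and $AXB\doteq PYQ$. Then $X\doteq Y$. That is, the monoid $SB_n^+$ is left and right cancellative.
   Context: Fix $n\ge 2$. The positive singular braid monoid $SB_n^+$ is the monoid with generators $\sigma_1,\dots,\sigma_{n-1},x_1,\dots,x_{n-1}$ and relations: $\sigma_i\sigma_j=\sigma_j\sigma_i$ and $x_ix_j=x_jx_i$ if $|i-j|>1$; $x_i\sigma_j=\sigma_jx_i$ if $|i-j|\ne 1$; $\sigma_i\sigma_{i+1}\sigma_i=\sigma_{i+1}\sigma_i\sigma_{i+1}$; $\sigma_i\sigma_{i+1}x_i=x_{i+1}\sigma_i\sigma_{i+1}$; $\sigma_{i+1}\sigma_ix_{i+1}=x_i\sigma_{i+1}\sigma_i$. A positive word is a word in the letters $\sigma_i,x_i$. For positive words, $A\doteq B$ means they represent the same element of $SB_n^+$. *)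

theory Defs
  imports Main
begin

datatype letter = Sig nat | Xl nat

fun idx :: "letter \<Rightarrow> nat" where
  "idx (Sig i) = i" | "idx (Xl i) = i"

definition pos_word :: "nat \<Rightarrow> letter list \<Rightarrow> bool" where
  "pos_word n w \<longleftrightarrow> (\<forall>a\<in>set w. 1 \<le> idx a \<and> idx a \<le> n - 1)"

inductive sb_rel :: "nat \<Rightarrow> letter list \<Rightarrow> letter list \<Rightarrow> bool" for n where
  comm_ss: "\<lbrakk>1 \<le> i; i \<le> n - 1; 1 \<le> j; j \<le> n - 1; i + 1 < j \<or> j + 1 < i\<rbrakk>
     \<Longrightarrow> sb_rel n [Sig i, Sig j] [Sig j, Sig i]"
| comm_xx: "\<lbrakk>1 \<le> i; i \<le> n - 1; 1 \<le> j; j \<le> n - 1; i + 1 < j \<or> j + 1 < i\<rbrakk>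
     \<Longrightarrow> sb_rel n [Xl i, Xl j] [Xl j, Xl i]"
| comm_xs: "\<lbrakk>1 \<le> i; i \<le> n - 1; 1 \<le> j; j \<le> n - 1; i \<noteq> j + 1; j \<noteq> i + 1\<rbrakk>
     \<Longrightarrow> sb_rel n [Xl i, Sig j] [Sig j, Xl i]"
| braid: "\<lbrakk>1 \<le> i; i + 1 \<le> n - 1\<rbrakk>
     \<Longrightarrow> sb_rel n [Sig i, Sig (i+1), Sig i] [Sig (i+1), Sig i, Sig (i+1)]"
| mixed1: "\<lbrakk>1 \<le> i; i + 1 \<le> n - 1\<rbrakk>
     \<Longrightarrow> sb_rel n [Sig i, Sig (i+1), Xl i] [Xl (i+1), Sig i, Sig (i+1)]"
| mixed2: "\<lbrakk>1 \<le> i; i + 1 \<le> n - 1\<rbrakk>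
     \<Longrightarrow> sb_rel n [Sig (i+1), Sig i, Xl (i+1)] [Xl i, Sig (i+1), Sig i]"

inductive sb_eq :: "nat \<Rightarrow> letter list \<Rightarrow> letter list \<Rightarrow> bool" for n where
  refl: "sb_eq n w w"
| sym: "sb_eq n u v \<Longrightarrow> sb_eq n v u"
| trans: "sb_eq n u v \<Longrightarrow> sb_eq n v w \<Longrightarrow> sb_eq n u w"
| rel: "sb_rel n u v \<Longrightarrow> sb_eq n (a @ u @ b) (a @ v @ b)"

end

theory Submission
  imports Defs
begin

(*
  The presentation of SB_n^+ is homogeneous and complemented: for distinct letters a, b there is
  at most one defining relation of the form a u = b v. By Dehornoy's theory of subword reversing,
  such a monoid is left cancellative as soon as the cube condition holds on triples of letters.
  More precisely, a X = b Y forces X = Y when a = b, and X = u Z, Y = v Z for the complement (u, v)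
  of (a, b) otherwise. This is proved by induction on the length of X: the cube condition, applied
  to shorter words, makes this "factorisation through the heads" transitive along a chain of
  elementary moves. The cube condition on letters is a finite computation by reversing. Right
  cancellativity follows because reversing words maps relations to relations.
*)

declare sb_eq.trans [trans]

lemma sb_eq_length: "sb_eq n u v \<Longrightarrow> length u = length v"
  by (induction rule: sb_eq.induct) (auto elim: sb_rel.cases)

lemma sb_eq_context: "sb_eq n u v \<Longrightarrow> sb_eq n (p @ u @ s) (p @ v @ s)"
proof (induction rule: sb_eq.induct)
  case (rel u v a b)
  then show ?case
    using sb_eq.rel[of n u v "p @ a" "b @ s"] by simp
qed (auto intro: sb_eq.intros)

lemma sb_eq_append: "sb_eq n u u' \<Longrightarrow> sb_eq n v v' \<Longrightarrow> sb_eq n (u @ v) (u' @ v')"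
  using sb_eq_context[of n u u' "[]" v] sb_eq_context[of n v v' u' "[]"] sb_eq.trans by fastforce

lemma sb_eq_append_left: "sb_eq n v v' \<Longrightarrow> sb_eq n (u @ v) (u @ v')"
  by (rule sb_eq_append[OF sb_eq.refl])

definition valid_index :: "nat \<Rightarrow> nat \<Rightarrow> bool" where
  "valid_index n i \<longleftrightarrow> 1 \<le> i \<and> i \<le> n - 1"

fun complement :: "nat \<Rightarrow> letter \<Rightarrow> letter \<Rightarrow> (letter list \<times> letter list) option" where
  "complement n (Sig i) (Sig j) =
     (if valid_index n i \<and> valid_index n j then
        if i + 1 < j \<or> j + 1 < i then Some ([Sig j], [Sig i])
        else if j = i + 1 \<or> i = j + 1 then Some ([Sig j, Sig i], [Sig i, Sig j])
        else None
      else None)"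
| "complement n (Xl i) (Xl j) =
     (if valid_index n i \<and> valid_index n j \<and> (i + 1 < j \<or> j + 1 < i)
      then Some ([Xl j], [Xl i]) else None)"
| "complement n (Sig i) (Xl j) =
     (if valid_index n i \<and> valid_index n j then
        if j = i + 1 then Some ([Sig (i + 1), Xl i], [Sig i, Sig (i + 1)])
        else if i = j + 1 then Some ([Sig j, Xl i], [Sig i, Sig j])
        else Some ([Xl j], [Sig i])
      else None)"
| "complement n (Xl j) (Sig i) =
     (if valid_index n i \<and> valid_index n j then
        if j = i + 1 then Some ([Sig i, Sig (i + 1)], [Sig (i + 1), Xl i])
        else if i = j + 1 then Some ([Sig i, Sig j], [Sig j, Xl i])
        else Some ([Sig i], [Xl j])
      else None)"

lemma complement_iff:
  "complement n a b = Some (u, v) \<longleftrightarrow> sb_rel n (a # u) (b # v) \<or> sb_rel n (b # v) (a # u)"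
proof
  assume "complement n a b = Some (u, v)"
  then show "sb_rel n (a # u) (b # v) \<or> sb_rel n (b # v) (a # u)"
    using sb_rel.braid sb_rel.mixed1 sb_rel.mixed2
    by (cases a; cases b) (auto simp: valid_index_def split: if_splits intro: sb_rel.intros)
next
  assume "sb_rel n (a # u) (b # v) \<or> sb_rel n (b # v) (a # u)"
  then show "complement n a b = Some (u, v)"
    by (auto simp: valid_index_def elim!: sb_rel.cases)
qed

lemma complement_swap: "complement n a b = Some (u, v) \<Longrightarrow> complement n b a = Some (v, u)"
  by (auto simp: complement_iff)

lemma complement_neq: "complement n a b = Some (u, v) \<Longrightarrow> a \<noteq> b"
  by (cases a; cases b) (auto split: if_splits)

lemma sb_eq_complement: "complement n a b = Some (u, v) \<Longrightarrow> sb_eq n (a # u) (b # v)"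
  unfolding complement_iff using sb_eq.rel[of n _ _ "[]" "[]"] sb_eq.sym by fastforce

lemma sb_rel_complement:
  "sb_rel n l r \<Longrightarrow> \<exists>a b u v. l = a # u \<and> r = b # v \<and> complement n a b = Some (u, v)"
  by (cases l; cases r) (auto simp: complement_iff elim: sb_rel.cases)

lemma complement_valid_index:
  "complement n a b = Some p \<Longrightarrow> valid_index n (idx a) \<and> valid_index n (idx b)"
  by (cases a; cases b) (auto split: if_splits)

(*
  Dehornoy's right reversing of the signed word u\<inverse> v, with f steps of fuel: each step
  replaces a\<inverse> b by x y\<inverse>, where (x, y) is the complement of (a, b). The result
  Reversed v' u' stands for the signed word v' u'\<inverse>.
*)
datatype reversing_result = Reversed "letter list" "letter list" | Stuck | Out_of_fuel

fun subword_reverse :: "nat \<Rightarrow> nat \<Rightarrow> letter list \<Rightarrow> letter list \<Rightarrow> reversing_result" where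
  "subword_reverse n 0 u v = Out_of_fuel"
| "subword_reverse n (Suc f) [] v = Reversed v []"
| "subword_reverse n (Suc f) u [] = Reversed [] u"
| "subword_reverse n (Suc f) (a # u) (b # v) =
     (if a = b then subword_reverse n f u v
      else case complement n a b of
        None \<Rightarrow> Stuck
      | Some (x, y) \<Rightarrow>
          (case subword_reverse n f u x of
            Reversed p q \<Rightarrow>
              (case subword_reverse n f v (y @ q) of Reversed r s \<Rightarrow> Reversed (p @ s) r | e \<Rightarrow> e)
          | e \<Rightarrow> e))"

lemma subword_reverse_sound: "subword_reverse n f u v = Reversed v' u' \<Longrightarrow> sb_eq n (u @ v') (v @ u')"
proof (induction n f u v arbitrary: v' u' rule: subword_reverse.induct)
  case (4 n f a u b v)
  show ?case
  proof (cases "a = b")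
    case True
    then show ?thesis
      using "4.IH"(1) "4.prems" sb_eq_append_left[of n _ _ "[a]"] by simp
  next
    case False
    then obtain x y p q r s where xy: "complement n a b = Some (x, y)"
      and p: "subword_reverse n f u x = Reversed p q" and r: "subword_reverse n f v (y @ q) = Reversed r s"
      and result: "v' = p @ s" "u' = r"
      using "4.prems" by (auto split: option.splits reversing_result.splits)
    have "sb_eq n (a # u @ p @ s) (a # x @ q @ s)"
      using sb_eq_append[OF "4.IH"(2)[OF False xy HOL.refl p] sb_eq.refl[of n s]]
        sb_eq_append_left[of n _ _ "[a]"] by simp
    also have "sb_eq n \<dots> (b # y @ q @ s)"
      using sb_eq_append[OF sb_eq_complement[OF xy] sb_eq.refl[of n "q @ s"]] by simp
    also have "sb_eq n \<dots> (b # v @ r)"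
      using "4.IH"(3)[OF False xy HOL.refl p r] sb_eq_append_left[of n _ _ "[b]"] sb_eq.sym by fastforce
    finally show ?thesis
      using result by simp
  qed
qed (auto intro: sb_eq.refl)

(*
  Dehornoy's cube condition on the letters a, b, c, decided by reversing: writing v1\<inverse> u2
  as p q\<inverse>, the words u1 p and v2 q must have the form u w and v w for the complement
  (u, v) of (a, b).
*)
definition cube_condition :: "nat \<Rightarrow> letter \<Rightarrow> letter \<Rightarrow> letter \<Rightarrow> bool" where
  "cube_condition n a b c \<longleftrightarrow> (a \<noteq> b \<longrightarrow> a \<noteq> c \<longrightarrow> b \<noteq> c \<longrightarrow>
     (case (complement n a c, complement n c b) of
       (Some (u1, v1), Some (u2, v2)) \<Rightarrow>
         (case subword_reverse n 10 v1 u2 of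
           Stuck \<Rightarrow> True
         | Out_of_fuel \<Rightarrow> False
         | Reversed p q \<Rightarrow>
             (case complement n a b of
               None \<Rightarrow> False
             | Some (u, v) \<Rightarrow>
                 (case subword_reverse n 10 u (u1 @ p) of
                   Reversed w e \<Rightarrow> e = [] \<and> subword_reverse n 10 (v @ w) (v2 @ q) = Reversed [] []
                 | _ \<Rightarrow> False)))
     | _ \<Rightarrow> True))"

lemma gap_cases:
  fixes g :: nat
  obtains "g = 0" | "g = 1" | d where "g = d + 2"
  by (metis One_nat_def add_2_eq_Suc' not0_implies_Suc)

lemma all_letters_with_idx: "(\<forall>a. idx a = i \<longrightarrow> P a) \<longleftrightarrow> P (Sig i) \<and> P (Xl i)"
  by (metis idx.simps letter.exhaust)

definition cube_condition_at :: "nat \<Rightarrow> nat \<Rightarrow> nat \<Rightarrow> nat \<Rightarrow> bool" where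
  "cube_condition_at n i j k \<longleftrightarrow> valid_index n i \<longrightarrow> valid_index n j \<longrightarrow> valid_index n k \<longrightarrow>
     (\<forall>a b c. idx a = i \<longrightarrow> idx b = j \<longrightarrow> idx c = k \<longrightarrow> cube_condition n a b c)"

definition orderings :: "'a \<Rightarrow> 'a \<Rightarrow> 'a \<Rightarrow> ('a \<times> 'a \<times> 'a) set" where
  "orderings x y z = {(x, y, z), (x, z, y), (y, x, z), (y, z, x), (z, x, y), (z, y, x)}"

lemma triple_in_orderings_of_gaps: "\<exists>m g1 g2. (i :: nat, j, k) \<in> orderings m (m + g1) (m + g1 + g2)"
  unfolding orderings_def by simp presburger

(* The check only depends on which gaps between the sorted indices are 0, 1 or at least 2. *)
lemma cube_condition_gaps:
  "\<forall>(i, j, k) \<in> orderings m (m + g1) (m + g1 + g2). cube_condition_at n i j k"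
  by (cases g1 rule: gap_cases; cases g2 rule: gap_cases)
    (simp_all add: orderings_def cube_condition_at_def all_letters_with_idx cube_condition_def
      valid_index_def numeral_eq_Suc)

lemma cube_condition_all: "cube_condition n a b c"
proof (cases "valid_index n (idx a) \<and> valid_index n (idx b) \<and> valid_index n (idx c)")
  case True
  obtain m g1 g2 where "(idx a, idx b, idx c) \<in> orderings m (m + g1) (m + g1 + g2)"
    using triple_in_orderings_of_gaps by blast
  then have "cube_condition_at n (idx a) (idx b) (idx c)"
    using cube_condition_gaps by fast
  with True show ?thesis
    unfolding cube_condition_at_def by blast
next
  case False
  then show ?thesis
    by (auto simp: cube_condition_def split: option.splits dest: complement_valid_index)
qed

definition head_factors :: "nat \<Rightarrow> letter \<Rightarrow> letter \<Rightarrow> letter list \<Rightarrow> letter list \<Rightarrow> bool" where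
  "head_factors n a b X Y \<longleftrightarrow>
     (if a = b then sb_eq n X Y
      else \<exists>u v Z. complement n a b = Some (u, v) \<and> sb_eq n X (u @ Z) \<and> sb_eq n Y (v @ Z))"

definition head_factors_below :: "nat \<Rightarrow> nat \<Rightarrow> bool" where
  "head_factors_below n N \<longleftrightarrow>
     (\<forall>a b X Y. length X < N \<longrightarrow> sb_eq n (a # X) (b # Y) \<longrightarrow> head_factors n a b X Y)"

lemma head_factors_belowD:
  "head_factors_below n N \<Longrightarrow> length X < N \<Longrightarrow> sb_eq n (a # X) (b # Y) \<Longrightarrow> head_factors n a b X Y"
  by (simp add: head_factors_below_def)

lemma head_factors_refl: "head_factors n a a X X"
  by (simp add: head_factors_def sb_eq.refl)

lemma head_factors_sym: "head_factors n a b X Y \<Longrightarrow> head_factors n b a Y X"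
  unfolding head_factors_def by (metis complement_swap sb_eq.sym)

lemma head_factors_cong:
  assumes "head_factors n a b X Y" "sb_eq n X X'" "sb_eq n Y Y'"
  shows "head_factors n a b X' Y'"
proof (cases "a = b")
  case True
  then show ?thesis
    using assms by (simp add: head_factors_def) (meson sb_eq.sym sb_eq.trans)
next
  case False
  then obtain u v Z where "complement n a b = Some (u, v)" "sb_eq n X (u @ Z)" "sb_eq n Y (v @ Z)"
    using assms(1) by (auto simp: head_factors_def)
  moreover have "sb_eq n X' (u @ Z)" "sb_eq n Y' (v @ Z)"
    using assms(2,3) calculation(2,3) sb_eq.sym sb_eq.trans by blast+
  ultimately show ?thesis
    using False by (auto simp: head_factors_def)
qed

lemma sb_eq_cancel_prefix_below:
  assumes "head_factors_below n N" "length (p @ Z) \<le> N" "sb_eq n (p @ Z) (p @ T)"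
  shows "sb_eq n Z T"
  using assms(2,3)
proof (induction p)
  case (Cons a p)
  then have "head_factors n a a (p @ Z) (p @ T)"
    using head_factors_belowD[OF assms(1)] by simp
  with Cons show ?case
    by (simp add: head_factors_def)
qed simp

definition reversing_factors :: "nat \<Rightarrow> reversing_result \<Rightarrow> letter list \<Rightarrow> letter list \<Rightarrow> bool" where
  "reversing_factors n r Z T \<longleftrightarrow>
     (case r of
       Reversed v' u' \<Rightarrow> \<exists>W. sb_eq n Z (v' @ W) \<and> sb_eq n T (u' @ W)
     | Stuck \<Rightarrow> False
     | Out_of_fuel \<Rightarrow> True)"

lemma subword_reverse_complete:
  "head_factors_below n N \<Longrightarrow> length (u @ Z) \<le> N \<Longrightarrow> sb_eq n (u @ Z) (v @ T) \<Longrightarrow>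
    reversing_factors n (subword_reverse n f u v) Z T"
proof (induction n f u v arbitrary: Z T rule: subword_reverse.induct)
  case (2 n f v)
  then show ?case
    using sb_eq.refl by (fastforce simp: reversing_factors_def)
next
  case (3 n f a u)
  then show ?case
    using sb_eq.refl sb_eq.sym by (fastforce simp: reversing_factors_def)
next
  case (4 n f a u b v)
  have heads: "head_factors n a b (u @ Z) (v @ T)"
    by (rule head_factors_belowD[OF "4.prems"(1)]) (use "4.prems" in simp_all)
  show ?case
  proof (cases "a = b")
    case True
    then show ?thesis
      using "4.IH"(1) "4.prems" heads by (simp add: head_factors_def)
  next
    case False
    then obtain x y W0 where xy: "complement n a b = Some (x, y)"
      and W0: "sb_eq n (u @ Z) (x @ W0)" "sb_eq n (v @ T) (y @ W0)"
      using heads by (auto simp: head_factors_def)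
    have IH1: "reversing_factors n (subword_reverse n f u x) Z W0"
      using "4.IH"(2)[OF False xy HOL.refl] "4.prems"(1,2) W0(1) by simp
    show ?thesis
    proof (cases "subword_reverse n f u x")
      case (Reversed p q)
      then obtain W1 where W1: "sb_eq n Z (p @ W1)" "sb_eq n W0 (q @ W1)"
        using IH1 by (auto simp: reversing_factors_def)
      have "sb_eq n (v @ T) ((y @ q) @ W1)"
        using sb_eq.trans[OF W0(2) sb_eq_append_left[OF W1(2)]] by simp
      then have IH2: "reversing_factors n (subword_reverse n f v (y @ q)) T W1"
        using "4.IH"(3)[OF False xy HOL.refl Reversed] "4.prems"(1,2) sb_eq_length[OF "4.prems"(3)]
        by simp
      show ?thesis
      proof (cases "subword_reverse n f v (y @ q)")
        case (Reversed r s)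
        then obtain W2 where W2: "sb_eq n T (r @ W2)" "sb_eq n W1 (s @ W2)"
          using IH2 by (auto simp: reversing_factors_def)
        have "sb_eq n Z ((p @ s) @ W2)"
          using sb_eq.trans[OF W1(1) sb_eq_append_left[OF W2(2)]] by simp
        then show ?thesis
          using False xy \<open>subword_reverse n f u x = Reversed p q\<close> Reversed W2(1)
          by (auto simp: reversing_factors_def)
      qed (use False xy Reversed IH2 in \<open>auto simp: reversing_factors_def\<close>)
    qed (use False xy IH1 in \<open>auto simp: reversing_factors_def\<close>)
  qed
qed (simp add: reversing_factors_def)

lemma complement_cube:
  assumes below: "head_factors_below n N" and distinct: "a \<noteq> b" "a \<noteq> c" "b \<noteq> c"
    and ac: "complement n a c = Some (u1, v1)" and cb: "complement n c b = Some (u2, v2)"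
    and "length (v1 @ Z1) \<le> N" "sb_eq n (v1 @ Z1) (u2 @ Z2)"
  shows "\<exists>u v Z. complement n a b = Some (u, v) \<and> sb_eq n (u1 @ Z1) (u @ Z) \<and> sb_eq n (v2 @ Z2) (v @ Z)"
proof -
  have complete: "reversing_factors n (subword_reverse n 10 v1 u2) Z1 Z2"
    using subword_reverse_complete[OF below] assms(7,8) by blast
  have cube: "cube_condition n a b c"
    by (rule cube_condition_all)
  obtain p q W where pq: "subword_reverse n 10 v1 u2 = Reversed p q"
    and W: "sb_eq n Z1 (p @ W)" "sb_eq n Z2 (q @ W)"
    using complete cube distinct ac cb
    by (auto simp: reversing_factors_def cube_condition_def split: reversing_result.splits)
  obtain u v where uv: "complement n a b = Some (u, v)"
    using cube distinct ac cb pq by (auto simp: cube_condition_def split: option.splits)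
  obtain w where uw: "subword_reverse n 10 u (u1 @ p) = Reversed w []"
    and vw: "subword_reverse n 10 (v @ w) (v2 @ q) = Reversed [] []"
    using cube distinct ac cb pq uv
    by (cases "subword_reverse n 10 u (u1 @ p)") (auto simp: cube_condition_def)
  have "sb_eq n (u1 @ Z1) (u @ w @ W)"
  proof -
    have "sb_eq n (u1 @ Z1) ((u1 @ p) @ W)"
      using sb_eq_append_left[OF W(1)] by simp
    also have "sb_eq n \<dots> ((u @ w) @ W)"
      using sb_eq_append[OF subword_reverse_sound[OF uw] sb_eq.refl[of n W]] sb_eq.sym by simp
    finally show ?thesis by simp
  qed
  moreover have "sb_eq n (v2 @ Z2) (v @ w @ W)"
  proof -
    have "sb_eq n (v2 @ Z2) ((v2 @ q) @ W)"
      using sb_eq_append_left[OF W(2)] by simp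
    also have "sb_eq n \<dots> ((v @ w) @ W)"
      using sb_eq_append[OF subword_reverse_sound[OF vw] sb_eq.refl[of n W]] sb_eq.sym by simp
    finally show ?thesis by simp
  qed
  ultimately show ?thesis
    using uv by blast
qed

lemma head_factors_complements:
  assumes below: "head_factors_below n N" and "a \<noteq> c" "c \<noteq> b"
    and ac: "complement n a c = Some (u1, v1)" and cb: "complement n c b = Some (u2, v2)"
    and length: "length (v1 @ Z1) \<le> N" and v1u2: "sb_eq n (v1 @ Z1) (u2 @ Z2)"
  shows "head_factors n a b (u1 @ Z1) (v2 @ Z2)"
proof (cases "a = b")
  case True
  then have "u2 = v1" "v2 = u1"
    using complement_swap[OF ac] cb by auto
  then have "sb_eq n Z1 Z2"
    using sb_eq_cancel_prefix_below[OF below length] v1u2 by simp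
  with True \<open>v2 = u1\<close> show ?thesis
    by (simp add: head_factors_def sb_eq_append_left)
next
  case False
  then show ?thesis
    using complement_cube[OF below False assms(2) not_sym[OF assms(3)] ac cb length v1u2]
    by (simp add: head_factors_def)
qed

lemma head_factors_trans:
  assumes below: "head_factors_below n N" and "length V \<le> N"
    and ac: "head_factors n a c X V" and cb: "head_factors n c b V Y"
  shows "head_factors n a b X Y"
proof -
  consider "a = c" | "c = b" | "a \<noteq> c" "c \<noteq> b"
    by blast
  then show ?thesis
  proof cases
    case 1
    then have "sb_eq n V X"
      using ac sb_eq.sym by (simp add: head_factors_def)
    with 1 show ?thesis
      using head_factors_cong[OF cb _ sb_eq.refl] by simp
  next
    case 2
    then have "sb_eq n V Y"
      using cb by (simp add: head_factors_def)
    with 2 show ?thesis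
      using head_factors_cong[OF ac sb_eq.refl] by simp
  next
    case 3
    then obtain u1 v1 Z1 u2 v2 Z2 where ac': "complement n a c = Some (u1, v1)"
      and cb': "complement n c b = Some (u2, v2)"
      and Z1: "sb_eq n X (u1 @ Z1)" "sb_eq n V (v1 @ Z1)"
      and Z2: "sb_eq n V (u2 @ Z2)" "sb_eq n Y (v2 @ Z2)"
      using ac cb by (auto simp: head_factors_def)
    have "sb_eq n (v1 @ Z1) (u2 @ Z2)"
      using sb_eq.sym[OF Z1(2)] Z2(1) by (rule sb_eq.trans)
    moreover have "length (v1 @ Z1) \<le> N"
      using sb_eq_length[OF Z1(2)] assms(2) by simp
    ultimately have "head_factors n a b (u1 @ Z1) (v2 @ Z2)"
      using head_factors_complements[OF below 3 ac' cb'] by blast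
    then show ?thesis
      using head_factors_cong sb_eq.sym Z1(1) Z2(2) by blast
  qed
qed

lemma head_factors_of_sb_eq_below:
  assumes below: "head_factors_below n N"
  shows "sb_eq n w w' \<Longrightarrow> w = a # X \<Longrightarrow> w' = b # Y \<Longrightarrow> length X \<le> N \<Longrightarrow> head_factors n a b X Y"
proof (induction arbitrary: a b X Y rule: sb_eq.induct)
  case refl
  then have "a = b" "X = Y"
    by simp_all
  then show ?case
    using head_factors_refl by simp
next
  case (sym u v)
  have "length Y \<le> N"
    using sb_eq_length[OF sym.hyps] sym.prems by simp
  then have "head_factors n b a Y X"
    using sym.IH[OF sym.prems(2,1)] by blast
  then show ?case
    by (rule head_factors_sym)
next
  case (trans u v w)
  obtain c V where v: "v = c # V"
    using sb_eq_length[OF trans.hyps(1)] trans.prems(1) by (cases v) auto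
  have "length V \<le> N"
    using sb_eq_length[OF trans.hyps(1)] trans.prems v by simp
  have "head_factors n a c X V"
    using trans.IH(1)[OF trans.prems(1) v trans.prems(3)] .
  moreover have "head_factors n c b V Y"
    using trans.IH(2)[OF v trans.prems(2) \<open>length V \<le> N\<close>] .
  ultimately show ?case
    using head_factors_trans[OF below \<open>length V \<le> N\<close>] by blast
next
  case (rel l r p s)
  show ?case
  proof (cases p)
    case Nil
    obtain a' b' u v where "l = a' # u" "r = b' # v" and uv: "complement n a' b' = Some (u, v)"
      using sb_rel_complement[OF rel.hyps] by blast
    with Nil rel.prems have "a = a'" "b = b'" "X = u @ s" "Y = v @ s"
      by simp_all
    with uv show ?thesis
      using complement_neq[OF uv] sb_eq.refl by (auto simp: head_factors_def)
  next
    case (Cons c p')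
    with rel.prems show ?thesis
      using sb_eq.rel[OF rel.hyps] by (auto simp: head_factors_def)
  qed
qed

lemma head_factors_below_all: "head_factors_below n N"
proof (induction N)
  case 0
  then show ?case
    by (simp add: head_factors_below_def)
next
  case (Suc N)
  show ?case
    unfolding head_factors_below_def
  proof (intro allI impI)
    fix a b X Y
    assume "length X < Suc N" "sb_eq n (a # X) (b # Y)"
    then show "head_factors n a b X Y"
      using head_factors_of_sb_eq_below[OF Suc.IH] by simp
  qed
qed

lemma sb_eq_cancel_left: "sb_eq n (p @ X) (p @ Y) \<Longrightarrow> sb_eq n X Y"
  using sb_eq_cancel_prefix_below[OF head_factors_below_all order.refl] .

lemma sb_rel_rev: "sb_rel n u v \<Longrightarrow> sb_rel n (rev u) (rev v) \<or> sb_rel n (rev v) (rev u)"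
proof (induction rule: sb_rel.induct)
  case (braid i)
  then show ?case using sb_rel.braid[of i n] by simp
next
  case (mixed1 i)
  then show ?case using sb_rel.mixed2[of i n] by simp
next
  case (mixed2 i)
  then show ?case using sb_rel.mixed1[of i n] by simp
qed (auto intro: sb_rel.intros)

lemma sb_eq_rev: "sb_eq n u v \<Longrightarrow> sb_eq n (rev u) (rev v)"
proof (induction rule: sb_eq.induct)
  case (rel u v a b)
  then show ?case
    using sb_rel_rev[OF rel] sb_eq.rel[of n _ _ "rev b" "rev a"] sb_eq.sym by fastforce
qed (auto intro: sb_eq.intros)

lemma sb_eq_cancel_right: "sb_eq n (X @ s) (Y @ s) \<Longrightarrow> sb_eq n X Y"
  using sb_eq_rev sb_eq_cancel_left[of n "rev s" "rev X" "rev Y"] by fastforce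

theorem corollary2p1:
  fixes n :: nat and A B P Q X Y :: "letter list"
  assumes "n \<ge> 2"
    and "pos_word n A" "pos_word n B" "pos_word n P" "pos_word n Q"
    and "pos_word n X" "pos_word n Y"
    and "sb_eq n A P" "sb_eq n B Q"
    and "sb_eq n (A @ X @ B) (P @ Y @ Q)"
  shows "sb_eq n X Y"
proof -
  \<comment> \<open>Cancellation holds for arbitrary words.\<close>
  have "sb_eq n (P @ Y @ Q) (A @ Y @ B)"
    using sb_eq_append[OF sb_eq.sym[OF assms(8)] sb_eq_append_left[OF sb_eq.sym[OF assms(9)]]] by simp
  with assms(10) have "sb_eq n (A @ X @ B) (A @ Y @ B)"
    by (rule sb_eq.trans)
  then have "sb_eq n (X @ B) (Y @ B)"
    by (rule sb_eq_cancel_left)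
  then show ?thesis
    by (rule sb_eq_cancel_right)
qed

end
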